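(* Let $(X,d)$ be a metric space and $\mu\colon X^3\to X$ a ternary operation. Then $\mu$ satisfies conditions (C1) and (C2) below if and only if it satisfies conditions (C0)', (C1)' and (C2)' below. (C1): There is an affine function $\rho(t)=Kt+H_0$ such that for all $a,b,c,a',b',c'\in X$, $d(\mu(a,b,c),\mu(a',b',c'))\leqslant \rho(d(a,a')+d(b,b')+d(c,c'))$. (C2): There is a function $H\colon\mathbb N\to[0,\infty)$ such that for every finite subset $A\subseteq X$ with $1\leqslant |A|\leqslant p$ there exist a finite median algebra $(\Pi,\mu_\Pi)$ and maps $\pi\colon A\to\Pi$, $\lambda\colon\Pi\to X$ such that for all $x,y,z\in\Pi$ and $a\in A$: $d(\lambda\mu_\Pi(x,y,z),\mu(\lambda x,\lambda y,\lambda z))\leqslant H(p)$ and $d(\lambda\pi a,a)\leqslant H(p)$. (C0)': There is a constant $\kappa_0$ such that for all $a_1,a_2,a_3\in X$, $d(\mu(a_1,a_1,a_2),a_1)\leqslant\kappa_0$, and $d(\mu(a_{\sigma(1)},a_{\sigma(2)},a_{\sigma(3)}),\mu(a_1,a_2,a_3))\leqslant\kappa_0$ for every permutation $\sigma$ of $\{1,2,3\}$. (C1)': There is an affine function $\rho\colon[0,\infty)\to[0,\infty)$ such that for all $a,a',b,c\in X$, $d(\mu(a,b,c),\mu(a',b,c))\leqslant\rho(d(a,a'))$. (C2)': There is a constant $\kappa_4>0$ such that for all $a,b,c,d\in X$, $d\big(\mu(\mu(a,b,c),b,d),\,\mu(a,b,\mu(c,b,d))\big)\leqslant\kappa_4$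.
   Context: A median algebra is a set $Y$ with a ternary operation $m$ satisfying: $m(a,a,b)=a$; $m(a_1,a_2,a_3)$ is invariant under permutations of its arguments; and $m(m(a,b,c),b,d)=m(a,b,m(c,b,d))$ for all $a,b,c,d\in Y$. *)

theory Defs
  imports "HOL-Analysis.Analysis" "HOL-Combinatorics.Permutations"
begin

definition median_algebra_on :: "'b set \<Rightarrow> ('b \<Rightarrow> 'b \<Rightarrow> 'b \<Rightarrow> 'b) \<Rightarrow> bool" where
  "median_algebra_on P m \<longleftrightarrow>
     (\<forall>a\<in>P. \<forall>b\<in>P. \<forall>c\<in>P. m a b c \<in> P) \<and>
     (\<forall>a\<in>P. \<forall>b\<in>P. m a a b = a) \<and>
     (\<forall>a\<in>P. \<forall>b\<in>P. \<forall>c\<in>P. m a b c = m b a c \<and> m a b c = m a c b) \<and>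
     (\<forall>a\<in>P. \<forall>b\<in>P. \<forall>c\<in>P. \<forall>d\<in>P. m (m a b c) b d = m a b (m c b d))"

definition C1 :: "('a::metric_space \<Rightarrow> 'a \<Rightarrow> 'a \<Rightarrow> 'a) \<Rightarrow> bool" where
  "C1 \<mu> \<longleftrightarrow> (\<exists>K H0::real. \<forall>a b c a' b' c'.
      dist (\<mu> a b c) (\<mu> a' b' c') \<le> K * (dist a a' + dist b b' + dist c c') + H0)"

text \<open>Finite median algebras are represented on finite carrier subsets of nat
  (every finite median algebra is isomorphic to one of these).\<close>
definition C2 :: "('a::metric_space \<Rightarrow> 'a \<Rightarrow> 'a \<Rightarrow> 'a) \<Rightarrow> bool" where
  "C2 \<mu> \<longleftrightarrow> (\<exists>H::nat \<Rightarrow> real. (\<forall>p. H p \<ge> 0) \<and>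
     (\<forall>p A. finite A \<and> 1 \<le> card A \<and> card A \<le> p \<longrightarrow>
        (\<exists>(P::nat set) m (\<pi>::'a \<Rightarrow> nat) (lam::nat \<Rightarrow> 'a).
           finite P \<and> median_algebra_on P m \<and> (\<forall>a\<in>A. \<pi> a \<in> P) \<and>
           (\<forall>x\<in>P. \<forall>y\<in>P. \<forall>z\<in>P.
              dist (lam (m x y z)) (\<mu> (lam x) (lam y) (lam z)) \<le> H p) \<and>
           (\<forall>a\<in>A. dist (lam (\<pi> a)) a \<le> H p))))"

definition C0' :: "('a::metric_space \<Rightarrow> 'a \<Rightarrow> 'a \<Rightarrow> 'a) \<Rightarrow> bool" where
  "C0' \<mu> \<longleftrightarrow> (\<exists>\<kappa>0::real.
     (\<forall>a1 a2. dist (\<mu> a1 a1 a2) a1 \<le> \<kappa>0) \<and>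
     (\<forall>(a::nat \<Rightarrow> 'a) \<sigma>. \<sigma> permutes {1,2,3} \<longrightarrow>
        dist (\<mu> (a (\<sigma> 1)) (a (\<sigma> 2)) (a (\<sigma> 3))) (\<mu> (a 1) (a 2) (a 3)) \<le> \<kappa>0))"

definition C1' :: "('a::metric_space \<Rightarrow> 'a \<Rightarrow> 'a \<Rightarrow> 'a) \<Rightarrow> bool" where
  "C1' \<mu> \<longleftrightarrow> (\<exists>K H::real. K \<ge> 0 \<and> H \<ge> 0 \<and>
     (\<forall>a a' b c. dist (\<mu> a b c) (\<mu> a' b c) \<le> K * dist a a' + H))"

definition C2' :: "('a::metric_space \<Rightarrow> 'a \<Rightarrow> 'a \<Rightarrow> 'a) \<Rightarrow> bool" where
  "C2' \<mu> \<longleftrightarrow> (\<exists>\<kappa>4::real. \<kappa>4 > 0 \<and>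
     (\<forall>a b c d. dist (\<mu> (\<mu> a b c) b d) (\<mu> a b (\<mu> c b d)) \<le> \<kappa>4))"

end

theory Submission
  imports Defs
begin

(* Both sides are equivalent to: (C1) together with the statement that every identity
   derivable from the median algebra axioms holds for \<mu> up to a bounded error.

   Given (C1) and (C2), evaluate both sides of a derivable identity in an approximating
   finite median algebra, where they coincide; (C1) controls the error along the term.
   Conversely, (C0'), (C1') and (C2') bound the error of each axiom and, with (C1), of each
   congruence step, so every derivation has bounded error. For (C2), use the free median
   algebra on p generators. It is finite: halfspaces separate points of any median algebra
   (maximal filters of the semilattice m _ b _ avoiding b), so it embeds into a power of the
   two-element median algebra, concretely as the sets of satisfying valuations of terms.
   Mapping each element back to X through a representative term gives the maps of (C2),
   with errors bounded because only finitely many identities are involved. *)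

section \<open>Median algebras are separated by halfspaces\<close>

definition bool_median :: "bool \<Rightarrow> bool \<Rightarrow> bool \<Rightarrow> bool" where
  "bool_median p q r \<longleftrightarrow> p \<and> q \<or> q \<and> r \<or> p \<and> r"

locale median_algebra =
  fixes m :: "'a \<Rightarrow> 'a \<Rightarrow> 'a \<Rightarrow> 'a"
  assumes majority: "m a a b = a"
    and swap12: "m a b c = m b a c"
    and swap23: "m a b c = m a c b"
    and median_assoc: "m (m a b c) b d = m a b (m c b d)"
begin

lemma rotate: "m y z x = m x y z"
  by (metis swap12 swap23)

text \<open>For a fixed base point \<open>b\<close>, \<open>(x, y) \<mapsto> m x b y\<close> is a semilattice operation
  (associative by \<open>median_assoc\<close>) with least element \<open>b\<close>; \<open>m x b y = x\<close> says \<open>x \<le> y\<close>.\<close>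

lemma meet_comm: "m x b y = m y b x"
  by (metis swap12 swap23)

lemma meet_idem: "m x b x = x"
  by (metis majority swap23)

lemma meet_base: "m x b b = b"
  by (metis majority swap12 swap23)

lemma meet_below_right: "m (m x b y) b y = m x b y"
  by (simp add: median_assoc meet_idem)

lemma meet_below_left: "m (m x b y) b x = m x b y"
  using meet_below_right[of y b x] by (simp add: meet_comm)

lemma meet_below_median: "m (m x b y) b (m x y z) = m x b y"
  by (smt (verit, del_insts) median_assoc rotate meet_base)

lemma median_disjoint:
  assumes "m h b x = b" and "m h b y = b"
  shows "m h b (m x y z) = b"
  using assms by (smt (verit) meet_below_median median_assoc swap12)

definition filter_at :: "'a \<Rightarrow> 'a set \<Rightarrow> bool" where
  "filter_at b F \<longleftrightarrow> (\<forall>x\<in>F. \<forall>y. m x b y = x \<longrightarrow> y \<in> F) \<and> (\<forall>x\<in>F. \<forall>y\<in>F. m x b y \<in> F)"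

lemma maximal_filter_exists:
  assumes "a \<noteq> b"
  obtains M where "filter_at b M" "a \<in> M" "b \<notin> M"
    and "\<And>X. filter_at b X \<Longrightarrow> b \<notin> X \<Longrightarrow> M \<subseteq> X \<Longrightarrow> X = M"
proof -
  let ?A = "{F. filter_at b F \<and> a \<in> F \<and> b \<notin> F}"
  have "{y. m a b y = a} \<in> ?A"
    using assms unfolding filter_at_def by (auto simp: meet_idem meet_base) (metis median_assoc)+
  then have "?A \<noteq> {}" by blast
  moreover have "\<Union>C \<in> ?A" if "C \<noteq> {}" "subset.chain ?A C" for C
  proof -
    from that have sub: "C \<subseteq> ?A" and chain: "\<And>X Y. X \<in> C \<Longrightarrow> Y \<in> C \<Longrightarrow> X \<subseteq> Y \<or> Y \<subseteq> X"
      by (auto simp: subset_chain_def)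
    have "filter_at b (\<Union>C)"
      unfolding filter_at_def
    proof (intro conjI ballI allI impI)
      fix x y assume "x \<in> \<Union>C" "m x b y = x"
      then show "y \<in> \<Union>C" using sub unfolding filter_at_def by blast
    next
      fix x y assume "x \<in> \<Union>C" "y \<in> \<Union>C"
      then obtain F G where "F \<in> C" "x \<in> F" "G \<in> C" "y \<in> G" by blast
      with chain[of F G] sub show "m x b y \<in> \<Union>C" unfolding filter_at_def by blast
    qed
    then show ?thesis using that sub by auto
  qed
  ultimately obtain M where "M \<in> ?A" "\<And>X. X \<in> ?A \<Longrightarrow> M \<subseteq> X \<Longrightarrow> X = M"
    using subset_Zorn_nonempty[of ?A] by blast
  then show ?thesis using that by blast
qed

lemma meets_base_outside_maximal_filter:
  assumes M: "filter_at b M" "a \<in> M" "b \<notin> M"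
    and max: "\<And>X. filter_at b X \<Longrightarrow> b \<notin> X \<Longrightarrow> M \<subseteq> X \<Longrightarrow> X = M"
    and "x \<notin> M"
  shows "\<exists>f\<in>M. m f b x = b"
proof (rule ccontr)
  assume avoid: "\<not> (\<exists>f\<in>M. m f b x = b)"
  \<comment> \<open>the filter generated by \<open>M\<close> and \<open>x\<close> would then avoid \<open>b\<close>\<close>
  let ?G = "{u. \<exists>f\<in>M. m (m f b x) b u = m f b x}"
  have meet: "\<And>x y. x \<in> M \<Longrightarrow> y \<in> M \<Longrightarrow> m x b y \<in> M"
    using M(1) unfolding filter_at_def by blast
  have "filter_at b ?G"
    unfolding filter_at_def
  proof (intro conjI ballI allI impI)
    fix u v assume "u \<in> ?G" "m u b v = u"
    then obtain f where f: "f \<in> M" "m (m f b x) b u = m f b x" by blast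
    have "m (m f b x) b v = m (m (m f b x) b u) b v" using f by simp
    also have "\<dots> = m (m f b x) b (m u b v)" by (rule median_assoc)
    also have "\<dots> = m f b x" using f \<open>m u b v = u\<close> by simp
    finally show "v \<in> ?G" using f by blast
  next
    fix u v assume "u \<in> ?G" "v \<in> ?G"
    then obtain f g where f: "f \<in> M" "m (m f b x) b u = m f b x"
      and g: "g \<in> M" "m (m g b x) b v = m g b x" by blast
    have fg: "m (m f b g) b x = m (m f b x) b (m g b x)"
      by (metis median_assoc meet_comm meet_idem)
    have "m (m (m f b g) b x) b (m u b v) = m (m (m f b x) b u) b (m (m g b x) b v)"
      unfolding fg by (metis median_assoc meet_comm)
    also have "\<dots> = m (m f b g) b x" using f g fg by simp
    finally show "m u b v \<in> ?G" using meet[OF f(1) g(1)] by blast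
  qed
  moreover have "M \<subseteq> ?G"
    using meet_below_left by blast
  moreover have "x \<in> ?G"
    using M(2) meet_below_right by blast
  moreover have "b \<notin> ?G"
    using avoid by (auto simp: meet_base)
  ultimately show False using max \<open>x \<notin> M\<close> by blast
qed

lemma separating_halfspace:
  assumes "a \<noteq> b"
  obtains H where "a \<in> H" "b \<notin> H"
    and "\<And>x y z. m x y z \<in> H \<longleftrightarrow> bool_median (x \<in> H) (y \<in> H) (z \<in> H)"
proof -
  obtain M where M: "filter_at b M" "a \<in> M" "b \<notin> M"
    and max: "\<And>X. filter_at b X \<Longrightarrow> b \<notin> X \<Longrightarrow> M \<subseteq> X \<Longrightarrow> X = M"
    using maximal_filter_exists[OF assms] by blast
  have up: "\<And>x y. x \<in> M \<Longrightarrow> m x b y = x \<Longrightarrow> y \<in> M"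
    and meet: "\<And>x y. x \<in> M \<Longrightarrow> y \<in> M \<Longrightarrow> m x b y \<in> M"
    using M(1) unfolding filter_at_def by blast+
  have convex: "m x y z \<in> M" if "x \<in> M" "y \<in> M" for x y z
    using up[OF meet[OF that] meet_below_median] .
  have coconvex: "m x y z \<notin> M" if "x \<notin> M" "y \<notin> M" for x y z
  proof
    obtain f where f: "f \<in> M" "m f b x = b"
      using meets_base_outside_maximal_filter[OF M max \<open>x \<notin> M\<close>] by blast
    obtain g where g: "g \<in> M" "m g b y = b"
      using meets_base_outside_maximal_filter[OF M max \<open>y \<notin> M\<close>] by blast
    have "m (m f b g) b x = m g b (m f b x)"
      by (simp add: meet_comm[of f b g] median_assoc)
    then have "m (m f b g) b x = b" using f(2) meet_base by simp
    moreover have "m (m f b g) b y = b"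
      using g(2) meet_base by (simp add: median_assoc)
    ultimately have "m (m f b g) b (m x y z) = b" by (rule median_disjoint)
    moreover assume "m x y z \<in> M"
    ultimately show False using meet[OF meet[OF f(1) g(1)]] M(3) by metis
  qed
  have "m x y z \<in> M \<longleftrightarrow> bool_median (x \<in> M) (y \<in> M) (z \<in> M)" for x y z
    using convex[of x y z] convex[of y z x] convex[of x z y]
      coconvex[of x y z] coconvex[of y z x] coconvex[of x z y] swap23[of x z y] rotate[of y z x]
    unfolding bool_median_def by auto
  then show ?thesis using that M(2,3) by blast
qed

end

section \<open>Median terms and the free median algebra\<close>

datatype mterm = Var nat | Med mterm mterm mterm

fun eval_mterm :: "('a \<Rightarrow> 'a \<Rightarrow> 'a \<Rightarrow> 'a) \<Rightarrow> (nat \<Rightarrow> 'a) \<Rightarrow> mterm \<Rightarrow> 'a" where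
  "eval_mterm m f (Var i) = f i"
| "eval_mterm m f (Med t u v) = m (eval_mterm m f t) (eval_mterm m f u) (eval_mterm m f v)"

fun vars :: "mterm \<Rightarrow> nat set" where
  "vars (Var i) = {i}"
| "vars (Med t u v) = vars t \<union> vars u \<union> vars v"

lemma finite_vars: "finite (vars t)"
  by (induction t) auto

lemma vars_nonempty: "vars t \<noteq> {}"
  by (induction t) auto

lemma eval_mterm_cong: "(\<And>i. i \<in> vars t \<Longrightarrow> f i = g i) \<Longrightarrow> eval_mterm m f t = eval_mterm m g t"
  by (induction t) auto

inductive median_eq :: "mterm \<Rightarrow> mterm \<Rightarrow> bool" where
  refl: "median_eq t t"
| sym: "median_eq t s \<Longrightarrow> median_eq s t"
| trans: "median_eq t s \<Longrightarrow> median_eq s u \<Longrightarrow> median_eq t u"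
| cong: "median_eq t t' \<Longrightarrow> median_eq u u' \<Longrightarrow> median_eq v v' \<Longrightarrow> median_eq (Med t u v) (Med t' u' v')"
| majority: "median_eq (Med a a b) a"
| swap12: "median_eq (Med a b c) (Med b a c)"
| swap23: "median_eq (Med a b c) (Med a c b)"
| assoc: "median_eq (Med (Med a b c) b d) (Med a b (Med c b d))"

lemma eval_mterm_in_carrier:
  assumes "median_algebra_on P m" "\<And>i. f i \<in> P"
  shows "eval_mterm m f t \<in> P"
proof (induction t)
  case (Med t u v)
  then show ?case using assms(1) unfolding median_algebra_on_def by simp
qed (simp add: assms(2))

lemma median_eq_sound:
  assumes "median_eq t s" "median_algebra_on P m" "\<And>i. f i \<in> P"
  shows "eval_mterm m f t = eval_mterm m f s"
proof -
  let ?e = "eval_mterm m f"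
  have in_P: "?e t \<in> P" for t
    using eval_mterm_in_carrier assms(2,3) by blast
  have "m (?e a) (?e a) (?e b) = ?e a"
    and "m (?e a) (?e b) (?e c) = m (?e b) (?e a) (?e c)"
    and "m (?e a) (?e b) (?e c) = m (?e a) (?e c) (?e b)"
    and "m (m (?e a) (?e b) (?e c)) (?e b) (?e d) = m (?e a) (?e b) (m (?e c) (?e b) (?e d))"
    for a b c d
    using assms(2) in_P unfolding median_algebra_on_def by blast+
  with assms(1) show ?thesis
    by (induction rule: median_eq.induct) simp_all
qed

quotient_type free_median = mterm / median_eq
  by (rule equivpI, unfold reflp_def symp_def transp_def) (blast intro: median_eq.refl median_eq.sym median_eq.trans)+

lift_definition free_med :: "free_median \<Rightarrow> free_median \<Rightarrow> free_median \<Rightarrow> free_median"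
  is Med
  by (rule median_eq.cong)

interpretation free: median_algebra free_med
proof
  show "free_med a a b = a" for a b
    by transfer (rule median_eq.majority)
  show "free_med a b c = free_med b a c" for a b c
    by transfer (rule median_eq.swap12)
  show "free_med a b c = free_med a c b" for a b c
    by transfer (rule median_eq.swap23)
  show "free_med (free_med a b c) b d = free_med a b (free_med c b d)" for a b c d
    by transfer (rule median_eq.assoc)
qed

lemma median_eq_complete:
  assumes "\<And>\<beta>. eval_mterm bool_median \<beta> t = eval_mterm bool_median \<beta> s"
  shows "median_eq t s"
proof (rule ccontr)
  assume "\<not> median_eq t s"
  then have "abs_free_median t \<noteq> abs_free_median s"
    by (simp add: free_median.abs_eq_iff)
  then obtain H where H: "abs_free_median t \<in> H" "abs_free_median s \<notin> H"
    and hom: "\<And>x y z. free_med x y z \<in> H \<longleftrightarrow> bool_median (x \<in> H) (y \<in> H) (z \<in> H)"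
    using free.separating_halfspace[OF \<open>abs_free_median t \<noteq> abs_free_median s\<close>] by blast
  have "abs_free_median r \<in> H \<longleftrightarrow> eval_mterm bool_median (\<lambda>i. abs_free_median (Var i) \<in> H) r" for r
    by (induction r) (simp_all add: hom flip: free_med.abs_eq)
  then show False using H assms by blast
qed

lemma perm3_cases:
  assumes "\<sigma> permutes {1, 2, 3 :: nat}"
  shows "(\<sigma> 1 = 1 \<and> \<sigma> 2 = 2 \<and> \<sigma> 3 = 3) \<or> (\<sigma> 1 = 1 \<and> \<sigma> 2 = 3 \<and> \<sigma> 3 = 2) \<or>
         (\<sigma> 1 = 2 \<and> \<sigma> 2 = 1 \<and> \<sigma> 3 = 3) \<or> (\<sigma> 1 = 2 \<and> \<sigma> 2 = 3 \<and> \<sigma> 3 = 1) \<or>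
         (\<sigma> 1 = 3 \<and> \<sigma> 2 = 1 \<and> \<sigma> 3 = 2) \<or> (\<sigma> 1 = 3 \<and> \<sigma> 2 = 2 \<and> \<sigma> 3 = 1)"
proof -
  have distinct: "\<sigma> 1 \<noteq> \<sigma> 2" "\<sigma> 1 \<noteq> \<sigma> 3" "\<sigma> 2 \<noteq> \<sigma> 3"
    using permutes_inj[OF assms] by (simp_all add: inj_eq)
  have "\<sigma> 1 = 1 \<or> \<sigma> 1 = 2 \<or> \<sigma> 1 = 3" "\<sigma> 2 = 1 \<or> \<sigma> 2 = 2 \<or> \<sigma> 2 = 3"
    "\<sigma> 3 = 1 \<or> \<sigma> 3 = 2 \<or> \<sigma> 3 = 3"
    using permutes_in_image[OF assms, of 1] permutes_in_image[OF assms, of 2]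
      permutes_in_image[OF assms, of 3] by simp_all
  then show ?thesis
    using distinct by (elim disjE) simp_all
qed

lemma median_eq_rotate: "median_eq (Med a b c) (Med b c a)"
  by (rule median_eq.trans[OF median_eq.swap12 median_eq.swap23])

lemma median_eq_permute3:
  assumes "\<sigma> permutes {1, 2, 3 :: nat}"
  shows "median_eq (Med (x (\<sigma> 1)) (x (\<sigma> 2)) (x (\<sigma> 3))) (Med (x 1) (x 2) (x 3))"
proof -
  have r: "median_eq (Med (x 1) (x 2) (x 3)) (Med (x 2) (x 3) (x 1))"
    by (rule median_eq_rotate)
  have "median_eq (Med (x 1) (x 2) (x 3)) (Med (x 1) (x 2) (x 3))"
    and "median_eq (Med (x 1) (x 3) (x 2)) (Med (x 1) (x 2) (x 3))"
    and "median_eq (Med (x 2) (x 1) (x 3)) (Med (x 1) (x 2) (x 3))"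
    and "median_eq (Med (x 2) (x 3) (x 1)) (Med (x 1) (x 2) (x 3))"
    and "median_eq (Med (x 3) (x 1) (x 2)) (Med (x 1) (x 2) (x 3))"
    and "median_eq (Med (x 3) (x 2) (x 1)) (Med (x 1) (x 2) (x 3))"
    by (rule median_eq.refl median_eq.swap23 median_eq.swap12 median_eq.sym[OF r] median_eq_rotate
        median_eq.trans[OF median_eq.swap12 median_eq.sym[OF r]])+
  with perm3_cases[OF assms] show ?thesis
    by (elim disjE conjE) simp_all
qed

section \<open>Finite Boolean models of the free median algebra\<close>

definition set_median :: "'b set \<Rightarrow> 'b set \<Rightarrow> 'b set \<Rightarrow> 'b set" where
  "set_median X Y Z = X \<inter> Y \<union> Y \<inter> Z \<union> X \<inter> Z"

lemma median_algebra_on_set_median: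
  assumes "\<And>X Y Z. X \<in> Q \<Longrightarrow> Y \<in> Q \<Longrightarrow> Z \<in> Q \<Longrightarrow> set_median X Y Z \<in> Q"
  shows "median_algebra_on Q set_median"
  unfolding median_algebra_on_def using assms by (auto simp: set_median_def)

definition truth_set :: "nat \<Rightarrow> mterm \<Rightarrow> nat set set" where
  "truth_set p t = {X. X \<subseteq> {..<p} \<and> eval_mterm bool_median (\<lambda>i. i \<in> X) t}"

text \<open>Terms in the first \<open>p\<close> variables with the same truth set are \<open>median_eq\<close>, so
  \<open>truth_sets p\<close> with \<open>set_median\<close> is the free median algebra on \<open>p\<close> generators.\<close>

definition truth_sets :: "nat \<Rightarrow> nat set set set" where
  "truth_sets p = truth_set p ` {t. vars t \<subseteq> {..<p}}"

definition term_of_truth_set :: "nat \<Rightarrow> nat set set \<Rightarrow> mterm" where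
  "term_of_truth_set p X = (SOME t. vars t \<subseteq> {..<p} \<and> truth_set p t = X)"

lemma truth_set_Med:
  "truth_set p (Med t u v) = set_median (truth_set p t) (truth_set p u) (truth_set p v)"
  by (auto simp: truth_set_def set_median_def bool_median_def)

lemma finite_truth_sets: "finite (truth_sets p)"
proof (rule finite_subset)
  show "truth_sets p \<subseteq> Pow (Pow {..<p})"
    by (auto simp: truth_sets_def truth_set_def)
qed simp

lemma set_median_in_truth_sets:
  assumes "X \<in> truth_sets p" "Y \<in> truth_sets p" "Z \<in> truth_sets p"
  shows "set_median X Y Z \<in> truth_sets p"
proof -
  from assms obtain t u v where "vars t \<subseteq> {..<p}" "vars u \<subseteq> {..<p}" "vars v \<subseteq> {..<p}"
    and "X = truth_set p t" "Y = truth_set p u" "Z = truth_set p v"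
    unfolding truth_sets_def by blast
  then show ?thesis
    unfolding truth_sets_def by (intro image_eqI[of _ _ "Med t u v"]) (auto simp: truth_set_Med)
qed

lemma median_algebra_on_truth_sets: "median_algebra_on (truth_sets p) set_median"
  using median_algebra_on_set_median set_median_in_truth_sets by blast

lemma truth_set_Var_in_truth_sets: "i < p \<Longrightarrow> truth_set p (Var i) \<in> truth_sets p"
  unfolding truth_sets_def by (intro image_eqI[of _ _ "Var i"]) auto

lemma term_of_truth_set:
  assumes "X \<in> truth_sets p"
  shows "vars (term_of_truth_set p X) \<subseteq> {..<p}" "truth_set p (term_of_truth_set p X) = X"
  using someI_ex[of "\<lambda>t. vars t \<subseteq> {..<p} \<and> truth_set p t = X"] assms
  unfolding term_of_truth_set_def truth_sets_def by blast+

lemma median_eq_if_truth_set_eq: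
  assumes "vars t \<subseteq> {..<p}" "vars s \<subseteq> {..<p}" "truth_set p t = truth_set p s"
  shows "median_eq t s"
proof (rule median_eq_complete)
  fix \<beta>
  let ?X = "{i. i < p \<and> \<beta> i}"
  have restrict: "eval_mterm bool_median \<beta> r = eval_mterm bool_median (\<lambda>i. i \<in> ?X) r"
    if "vars r \<subseteq> {..<p}" for r
    using that by (intro eval_mterm_cong) auto
  have "?X \<in> truth_set p t \<longleftrightarrow> ?X \<in> truth_set p s"
    using assms(3) by simp
  then have "eval_mterm bool_median (\<lambda>i. i \<in> ?X) t = eval_mterm bool_median (\<lambda>i. i \<in> ?X) s"
    unfolding truth_set_def by auto
  then show "eval_mterm bool_median \<beta> t = eval_mterm bool_median \<beta> s"
    using restrict[OF assms(1)] restrict[OF assms(2)] by simp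
qed

lemma median_eq_term_of_set_median:
  assumes "X \<in> truth_sets p" "Y \<in> truth_sets p" "Z \<in> truth_sets p"
  shows "median_eq (term_of_truth_set p (set_median X Y Z))
    (Med (term_of_truth_set p X) (term_of_truth_set p Y) (term_of_truth_set p Z))"
proof (rule median_eq_if_truth_set_eq)
  have XYZ: "set_median X Y Z \<in> truth_sets p"
    using assms by (rule set_median_in_truth_sets)
  show "vars (term_of_truth_set p (set_median X Y Z)) \<subseteq> {..<p}"
    using term_of_truth_set(1)[OF XYZ] .
  show "vars (Med (term_of_truth_set p X) (term_of_truth_set p Y) (term_of_truth_set p Z)) \<subseteq> {..<p}"
    using term_of_truth_set(1) assms by simp
  show "truth_set p (term_of_truth_set p (set_median X Y Z))
      = truth_set p (Med (term_of_truth_set p X) (term_of_truth_set p Y) (term_of_truth_set p Z))"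
    unfolding truth_set_Med using term_of_truth_set(2) assms XYZ by simp
qed

lemma median_eq_term_of_Var:
  assumes "i < p"
  shows "median_eq (term_of_truth_set p (truth_set p (Var i))) (Var i)"
proof (rule median_eq_if_truth_set_eq)
  have "truth_set p (Var i) \<in> truth_sets p"
    using assms by (rule truth_set_Var_in_truth_sets)
  then show "vars (term_of_truth_set p (truth_set p (Var i))) \<subseteq> {..<p}"
    and "truth_set p (term_of_truth_set p (truth_set p (Var i))) = truth_set p (Var i)"
    by (rule term_of_truth_set)+
qed (use assms in simp)

section \<open>Coarse median operators\<close>

definition bounded_apart :: "('a::metric_space \<Rightarrow> 'a \<Rightarrow> 'a \<Rightarrow> 'a) \<Rightarrow> mterm \<Rightarrow> mterm \<Rightarrow> bool" where
  "bounded_apart \<mu> t s \<longleftrightarrow> (\<exists>C. \<forall>g. dist (eval_mterm \<mu> g t) (eval_mterm \<mu> g s) \<le> C)"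

definition coarse_median_laws :: "('a::metric_space \<Rightarrow> 'a \<Rightarrow> 'a \<Rightarrow> 'a) \<Rightarrow> bool" where
  "coarse_median_laws \<mu> \<longleftrightarrow> (\<forall>t s. median_eq t s \<longrightarrow> bounded_apart \<mu> t s)"

lemma bounded_apart_uniform:
  assumes "finite I" and "\<And>i. i \<in> I \<Longrightarrow> bounded_apart \<mu> (t i) (s i)"
  obtains C where "\<And>i g. i \<in> I \<Longrightarrow> dist (eval_mterm \<mu> g (t i)) (eval_mterm \<mu> g (s i)) \<le> C"
proof -
  have "\<exists>C. \<forall>i\<in>I. \<forall>g. dist (eval_mterm \<mu> g (t i)) (eval_mterm \<mu> g (s i)) \<le> C"
    using assms
  proof (induction I rule: finite_induct)
    case (insert j I)
    then obtain C where "\<forall>i\<in>I. \<forall>g. dist (eval_mterm \<mu> g (t i)) (eval_mterm \<mu> g (s i)) \<le> C"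
      by blast
    moreover obtain D where "\<forall>g. dist (eval_mterm \<mu> g (t j)) (eval_mterm \<mu> g (s j)) \<le> D"
      using insert.prems[of j] unfolding bounded_apart_def by auto
    ultimately have "\<forall>i\<in>insert j I. \<forall>g. dist (eval_mterm \<mu> g (t i)) (eval_mterm \<mu> g (s i)) \<le> max C D"
      by (auto simp: le_max_iff_disj)
    then show ?case by blast
  qed simp
  then show ?thesis using that by blast
qed

definition coarse_lipschitz :: "('a::metric_space \<Rightarrow> 'a \<Rightarrow> 'a \<Rightarrow> 'a) \<Rightarrow> real \<Rightarrow> real \<Rightarrow> bool" where
  "coarse_lipschitz \<mu> K H \<longleftrightarrow>
     (\<forall>a b c a' b' c'. dist (\<mu> a b c) (\<mu> a' b' c') \<le> K * (dist a a' + dist b b' + dist c c') + H)"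

lemma C1_iff_coarse_lipschitz: "C1 \<mu> \<longleftrightarrow> (\<exists>K H. coarse_lipschitz \<mu> K H)"
  unfolding C1_def coarse_lipschitz_def ..

lemma C1_imp_coarse_lipschitz_nonneg:
  assumes "C1 \<mu>"
  obtains K H where "K \<ge> 0" "H \<ge> 0" "coarse_lipschitz \<mu> K H"
proof -
  obtain K H where KH: "coarse_lipschitz \<mu> K H"
    using assms C1_iff_coarse_lipschitz by blast
  have "H \<ge> 0"
    using KH[unfolded coarse_lipschitz_def, rule_format, of a b c a b c for a b c] by simp
  moreover have "coarse_lipschitz \<mu> \<bar>K\<bar> H"
    unfolding coarse_lipschitz_def
  proof (intro allI)
    fix a b c a' b' c' :: 'a
    have "K * (dist a a' + dist b b' + dist c c') \<le> \<bar>K\<bar> * (dist a a' + dist b b' + dist c c')"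
      by (intro mult_right_mono) auto
    then show "dist (\<mu> a b c) (\<mu> a' b' c') \<le> \<bar>K\<bar> * (dist a a' + dist b b' + dist c c') + H"
      using KH unfolding coarse_lipschitz_def by (smt (verit))
  qed
  ultimately show ?thesis using that abs_ge_zero by blast
qed

lemma coarse_lipschitz_le:
  assumes "coarse_lipschitz \<mu> K H" "K \<ge> 0"
    and "dist a a' \<le> r" "dist b b' \<le> s" "dist c c' \<le> t"
  shows "dist (\<mu> a b c) (\<mu> a' b' c') \<le> K * (r + s + t) + H"
proof -
  have "K * (dist a a' + dist b b' + dist c c') \<le> K * (r + s + t)"
    using assms(2-) by (intro mult_left_mono) auto
  then show ?thesis using assms(1) unfolding coarse_lipschitz_def by (smt (verit))
qed

definition approx_median_model ::
  "('a::metric_space \<Rightarrow> 'a \<Rightarrow> 'a \<Rightarrow> 'a) \<Rightarrow> real \<Rightarrow> 'a set \<Rightarrow> 'b set \<Rightarrow> ('b \<Rightarrow> 'b \<Rightarrow> 'b \<Rightarrow> 'b)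
     \<Rightarrow> ('a \<Rightarrow> 'b) \<Rightarrow> ('b \<Rightarrow> 'a) \<Rightarrow> bool" where
  "approx_median_model \<mu> h A P m \<pi> lam \<longleftrightarrow>
     finite P \<and> median_algebra_on P m \<and> (\<forall>a\<in>A. \<pi> a \<in> P) \<and>
     (\<forall>x\<in>P. \<forall>y\<in>P. \<forall>z\<in>P. dist (lam (m x y z)) (\<mu> (lam x) (lam y) (lam z)) \<le> h) \<and>
     (\<forall>a\<in>A. dist (lam (\<pi> a)) a \<le> h)"

lemma C2_iff_approx_median_model:
  "C2 \<mu> \<longleftrightarrow> (\<exists>H. (\<forall>p. 0 \<le> H p) \<and> (\<forall>p A. finite A \<and> 1 \<le> card A \<and> card A \<le> p \<longrightarrow>
      (\<exists>(P::nat set) m \<pi> lam. approx_median_model \<mu> (H p) A P m \<pi> lam)))"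
  unfolding C2_def approx_median_model_def ..

lemma approx_median_model_mono:
  "approx_median_model \<mu> h A P m \<pi> lam \<Longrightarrow> h \<le> h' \<Longrightarrow> approx_median_model \<mu> h' A P m \<pi> lam"
  unfolding approx_median_model_def by force

lemma median_algebra_on_bij_betw:
  assumes e: "bij_betw e Q P" and Q: "median_algebra_on Q m"
  shows "median_algebra_on P (\<lambda>x y z. e (m (inv_into Q e x) (inv_into Q e y) (inv_into Q e z)))"
proof -
  let ?d = "inv_into Q e"
  have d: "?d x \<in> Q" "e (?d x) = x" if "x \<in> P" for x
    using that bij_betwE[OF bij_betw_inv_into[OF e]] bij_betw_inv_into_right[OF e] by auto
  have de: "e X \<in> P" "?d (e X) = X" if "X \<in> Q" for X
    using that bij_betwE[OF e] bij_betw_inv_into_left[OF e] by auto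
  have maj: "m X X Y = X" if "X \<in> Q" "Y \<in> Q" for X Y
    using Q that unfolding median_algebra_on_def by blast
  have closed: "m X Y Z \<in> Q"
    and s12: "m X Y Z = m Y X Z" and s23: "m X Y Z = m X Z Y"
    if "X \<in> Q" "Y \<in> Q" "Z \<in> Q" for X Y Z
    using Q that unfolding median_algebra_on_def by blast+
  have asc: "m (m X Y Z) Y W = m X Y (m Z Y W)" if "X \<in> Q" "Y \<in> Q" "Z \<in> Q" "W \<in> Q" for X Y Z W
    using Q that unfolding median_algebra_on_def by blast
  show ?thesis
    unfolding median_algebra_on_def
  proof (intro conjI ballI)
    fix x y z w assume xyzw: "x \<in> P" "y \<in> P" "z \<in> P" "w \<in> P"
    show "e (m (?d x) (?d y) (?d z)) \<in> P"
      using xyzw by (simp add: d de closed)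
    show "e (m (?d x) (?d x) (?d y)) = x"
      using xyzw by (simp add: d maj)
    show "e (m (?d x) (?d y) (?d z)) = e (m (?d y) (?d x) (?d z))"
      using s12[of "?d x" "?d y" "?d z"] xyzw by (simp add: d)
    show "e (m (?d x) (?d y) (?d z)) = e (m (?d x) (?d z) (?d y))"
      using s23[of "?d x" "?d y" "?d z"] xyzw by (simp add: d)
    show "e (m (?d (e (m (?d x) (?d y) (?d z)))) (?d y) (?d w))
        = e (m (?d x) (?d y) (?d (e (m (?d z) (?d y) (?d w)))))"
      using xyzw by (simp add: d de closed asc)
  qed
qed

lemma approx_median_model_nat:
  assumes "approx_median_model \<mu> h A (Q::'b set) m \<pi> lam"
  shows "\<exists>(P::nat set) m' \<pi>' lam'. approx_median_model \<mu> h A P m' \<pi>' lam'"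
proof -
  have Q: "finite Q" "median_algebra_on Q m"
    using assms unfolding approx_median_model_def by blast+
  obtain e where e: "bij_betw e Q {0..<card Q}"
    using ex_bij_betw_finite_nat[OF Q(1)] by blast
  let ?d = "inv_into Q e"
  have d: "?d x \<in> Q" if "x \<in> {0..<card Q}" for x
    using that bij_betwE[OF bij_betw_inv_into[OF e]] by blast
  have de: "e X < card Q" "?d (e X) = X" if "X \<in> Q" for X
    using that bij_betwE[OF e] bij_betw_inv_into_left[OF e] by auto
  have closed: "m X Y Z \<in> Q" if "X \<in> Q" "Y \<in> Q" "Z \<in> Q" for X Y Z
    using Q(2) that unfolding median_algebra_on_def by blast
  have "approx_median_model \<mu> h A {0..<card Q} (\<lambda>x y z. e (m (?d x) (?d y) (?d z))) (e \<circ> \<pi>) (lam \<circ> ?d)"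
    using assms median_algebra_on_bij_betw[OF e Q(2)]
    unfolding approx_median_model_def by (auto simp: d de closed)
  then show ?thesis by blast
qed

lemma C2I:
  assumes "\<And>p. \<exists>h. \<forall>A. finite A \<and> 1 \<le> card A \<and> card A \<le> p \<longrightarrow>
      (\<exists>(Q::'b set) m \<pi> lam. approx_median_model \<mu> h A Q m \<pi> lam)"
  shows "C2 \<mu>"
proof -
  obtain h where h: "\<And>p A. finite A \<and> 1 \<le> card A \<and> card A \<le> p \<Longrightarrow>
      \<exists>(Q::'b set) m \<pi> lam. approx_median_model \<mu> (h p) A Q m \<pi> lam"
    using assms by metis
  have "finite A \<and> 1 \<le> card A \<and> card A \<le> p \<Longrightarrow>
      \<exists>(P::nat set) m \<pi> lam. approx_median_model \<mu> (max (h p) 0) A P m \<pi> lam" for p A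
    using h[of A p] approx_median_model_mono approx_median_model_nat by (metis max.cobounded1)
  then show ?thesis
    unfolding C2_iff_approx_median_model by (intro exI[of _ "\<lambda>p. max (h p) 0"]) auto
qed

fun approx_error :: "real \<Rightarrow> real \<Rightarrow> real \<Rightarrow> mterm \<Rightarrow> real" where
  "approx_error K H h (Var i) = h"
| "approx_error K H h (Med t u v) =
     K * (approx_error K H h t + approx_error K H h u + approx_error K H h v) + H + h"

lemma eval_mterm_approx:
  assumes \<mu>: "coarse_lipschitz \<mu> K H" "K \<ge> 0" and P: "median_algebra_on P m"
    and lam: "\<forall>x\<in>P. \<forall>y\<in>P. \<forall>z\<in>P. dist (lam (m x y z)) (\<mu> (lam x) (lam y) (lam z)) \<le> h"
    and f: "\<And>i. f i \<in> P" and g: "\<And>i. i \<in> vars t \<Longrightarrow> dist (lam (f i)) (g i) \<le> h"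
  shows "dist (lam (eval_mterm m f t)) (eval_mterm \<mu> g t) \<le> approx_error K H h t"
  using g
proof (induction t)
  case (Med t u v)
  let ?m = "eval_mterm m f" and ?g = "eval_mterm \<mu> g" and ?err = "approx_error K H h"
  have "dist (lam (m (?m t) (?m u) (?m v))) (\<mu> (lam (?m t)) (lam (?m u)) (lam (?m v))) \<le> h"
    using lam eval_mterm_in_carrier[OF P] f by blast
  moreover have "dist (\<mu> (lam (?m t)) (lam (?m u)) (lam (?m v))) (\<mu> (?g t) (?g u) (?g v))
      \<le> K * (?err t + ?err u + ?err v) + H"
    using Med by (intro coarse_lipschitz_le[OF \<mu>]) auto
  ultimately show ?case
    using dist_triangle[of "lam (m (?m t) (?m u) (?m v))" "\<mu> (?g t) (?g u) (?g v)"
        "\<mu> (lam (?m t)) (lam (?m u)) (lam (?m v))"] by simp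
qed simp

lemma median_eq_approx_bound:
  assumes "median_eq t s" "coarse_lipschitz \<mu> K H" "K \<ge> 0"
    and model: "approx_median_model \<mu> h (g ` (vars t \<union> vars s)) P m \<pi> lam"
  shows "dist (eval_mterm \<mu> g t) (eval_mterm \<mu> g s) \<le> approx_error K H h t + approx_error K H h s"
proof -
  define V where "V = vars t \<union> vars s"
  obtain i0 where i0: "i0 \<in> V"
    using vars_nonempty[of t] unfolding V_def by blast
  have P: "median_algebra_on P m" "\<And>a. a \<in> g ` V \<Longrightarrow> \<pi> a \<in> P"
    and lam: "\<forall>x\<in>P. \<forall>y\<in>P. \<forall>z\<in>P. dist (lam (m x y z)) (\<mu> (lam x) (lam y) (lam z)) \<le> h"
    and \<pi>: "\<And>a. a \<in> g ` V \<Longrightarrow> dist (lam (\<pi> a)) a \<le> h"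
    using model unfolding approx_median_model_def V_def by blast+
  \<comment> \<open>\<open>median_eq_sound\<close> needs a valuation into \<open>P\<close> of all variables, not only those in \<open>V\<close>\<close>
  define f where "f i = \<pi> (g (if i \<in> V then i else i0))" for i
  have f: "f i \<in> P" for i
    unfolding f_def using P(2) i0 by simp
  have "dist (lam (eval_mterm m f r)) (eval_mterm \<mu> g r) \<le> approx_error K H h r"
    if "vars r \<subseteq> V" for r
    using that \<pi> by (intro eval_mterm_approx[OF assms(2,3) P(1) lam f]) (auto simp: f_def)
  then have "dist (lam (eval_mterm m f t)) (eval_mterm \<mu> g t) \<le> approx_error K H h t"
    "dist (lam (eval_mterm m f s)) (eval_mterm \<mu> g s) \<le> approx_error K H h s"
    unfolding V_def by blast+
  moreover have "eval_mterm m f t = eval_mterm m f s"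
    using median_eq_sound[OF assms(1) P(1)] f by blast
  ultimately show ?thesis
    using dist_triangle2[of "eval_mterm \<mu> g t" "eval_mterm \<mu> g s" "lam (eval_mterm m f t)"]
    by (simp add: dist_commute)
qed

lemma C1_C2_imp_coarse_median_laws:
  assumes "C1 \<mu>" "C2 \<mu>"
  shows "coarse_median_laws \<mu>"
  unfolding coarse_median_laws_def bounded_apart_def
proof (intro allI impI)
  fix t s assume "median_eq t s"
  obtain K H0 where KH: "K \<ge> 0" "coarse_lipschitz \<mu> K H0"
    using C1_imp_coarse_lipschitz_nonneg[OF assms(1)] by blast
  obtain H where H: "\<And>p A. finite A \<and> 1 \<le> card A \<and> card A \<le> p \<Longrightarrow>
      \<exists>(P::nat set) m \<pi> lam. approx_median_model \<mu> (H p) A P m \<pi> lam"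
    using assms(2) unfolding C2_iff_approx_median_model by blast
  define V where "V = vars t \<union> vars s"
  have "dist (eval_mterm \<mu> g t) (eval_mterm \<mu> g s)
      \<le> approx_error K H0 (H (card V)) t + approx_error K H0 (H (card V)) s" for g
  proof -
    have "finite (g ` V) \<and> 1 \<le> card (g ` V) \<and> card (g ` V) \<le> card V"
      using vars_nonempty[of t] card_image_le[of V g]
      by (auto simp: V_def finite_vars Suc_le_eq card_gt_0_iff)
    from H[OF this] obtain P :: "nat set" and m \<pi> lam
      where "approx_median_model \<mu> (H (card V)) (g ` V) P m \<pi> lam"
      by blast
    then show ?thesis
      using median_eq_approx_bound[OF \<open>median_eq t s\<close> KH(2,1)] unfolding V_def by blast
  qed
  then show "\<exists>C. \<forall>g. dist (eval_mterm \<mu> g t) (eval_mterm \<mu> g s) \<le> C" by blast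
qed

lemma coarse_median_laws_imp_C0':
  assumes "coarse_median_laws \<mu>"
  shows "C0' \<mu>"
proof -
  obtain C1 where C1: "\<forall>g. dist (eval_mterm \<mu> g (Med (Var 0) (Var 0) (Var 1))) (eval_mterm \<mu> g (Var 0)) \<le> C1"
    using assms median_eq.majority unfolding coarse_median_laws_def bounded_apart_def by blast
  have fin: "finite {\<sigma>. \<sigma> permutes {1, 2, 3 :: nat}}"
    by (simp add: finite_permutations)
  have bounded: "bounded_apart \<mu> (Med (Var (\<sigma> 1)) (Var (\<sigma> 2)) (Var (\<sigma> 3))) (Med (Var 1) (Var 2) (Var 3))"
    if "\<sigma> \<in> {\<sigma>. \<sigma> permutes {1, 2, 3}}" for \<sigma>
    using that assms median_eq_permute3[of \<sigma> Var] unfolding coarse_median_laws_def by simp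
  obtain C2 where C2: "\<And>\<sigma> g. \<sigma> \<in> {\<sigma>. \<sigma> permutes {1, 2, 3}} \<Longrightarrow>
      dist (eval_mterm \<mu> g (Med (Var (\<sigma> 1)) (Var (\<sigma> 2)) (Var (\<sigma> 3))))
        (eval_mterm \<mu> g (Med (Var 1) (Var 2) (Var 3))) \<le> C2"
    using bounded_apart_uniform[of _ \<mu> "\<lambda>\<sigma>. Med (Var (\<sigma> 1)) (Var (\<sigma> 2)) (Var (\<sigma> 3))"
        "\<lambda>_. Med (Var 1) (Var 2) (Var 3)", OF fin bounded] by blast
  show ?thesis
    unfolding C0'_def
  proof (intro exI[of _ "max C1 C2"] conjI allI impI)
    fix a1 a2 :: 'a
    show "dist (\<mu> a1 a1 a2) a1 \<le> max C1 C2"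
      using C1[rule_format, of "\<lambda>i. if i = 0 then a1 else a2"] by simp
  next
    fix a :: "nat \<Rightarrow> 'a" and \<sigma> :: "nat \<Rightarrow> nat" assume "\<sigma> permutes {1, 2, 3}"
    then show "dist (\<mu> (a (\<sigma> 1)) (a (\<sigma> 2)) (a (\<sigma> 3))) (\<mu> (a 1) (a 2) (a 3)) \<le> max C1 C2"
      using C2[of \<sigma> a] by simp
  qed
qed

lemma coarse_median_laws_imp_C2':
  assumes "coarse_median_laws \<mu>"
  shows "C2' \<mu>"
proof -
  let ?t = "Med (Med (Var 0) (Var 1) (Var 2)) (Var 1) (Var 3)"
    and ?s = "Med (Var 0) (Var 1) (Med (Var 2) (Var 1) (Var 3))"
  obtain C where C: "\<forall>g. dist (eval_mterm \<mu> g ?t) (eval_mterm \<mu> g ?s) \<le> C"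
    using assms median_eq.assoc unfolding coarse_median_laws_def bounded_apart_def by blast
  show ?thesis
    unfolding C2'_def
  proof (intro exI[of _ "max C 1"] conjI allI)
    fix a b c d :: 'a
    show "dist (\<mu> (\<mu> a b c) b d) (\<mu> a b (\<mu> c b d)) \<le> max C 1"
      using C[rule_format, of "\<lambda>i. if i = 0 then a else if i = 1 then b else if i = 2 then c else d"]
      by simp
  qed simp
qed

lemma C1_imp_C1':
  assumes "C1 \<mu>"
  shows "C1' \<mu>"
proof -
  obtain K H where "K \<ge> 0" "H \<ge> 0" "coarse_lipschitz \<mu> K H"
    using C1_imp_coarse_lipschitz_nonneg[OF assms] .
  then show ?thesis
    unfolding C1'_def coarse_lipschitz_def by (metis add.right_neutral dist_self)
qed

lemma C0'_bounds:
  assumes "C0' \<mu>"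
  obtains k where "\<And>a b. dist (\<mu> a a b) a \<le> k"
    and "\<And>a b c. dist (\<mu> b a c) (\<mu> a b c) \<le> k"
    and "\<And>a b c. dist (\<mu> a c b) (\<mu> a b c) \<le> k"
    and "\<And>a b c. dist (\<mu> c b a) (\<mu> a b c) \<le> k"
proof -
  obtain k where maj: "\<And>a b. dist (\<mu> a a b) a \<le> k"
    and perm: "\<And>(a::nat \<Rightarrow> 'a) \<sigma>. \<sigma> permutes {1, 2, 3} \<Longrightarrow>
      dist (\<mu> (a (\<sigma> 1)) (a (\<sigma> 2)) (a (\<sigma> 3))) (\<mu> (a 1) (a 2) (a 3)) \<le> k"
    using assms unfolding C0'_def by blast
  let ?a = "\<lambda>a b c (i::nat). if i = 1 then a else if i = 2 then b else c"
  have s12: "dist (\<mu> b a c) (\<mu> a b c) \<le> k" for a b c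
    using perm[of "Transposition.transpose 1 2" "?a a b c"] by (simp add: permutes_swap_id)
  have s23: "dist (\<mu> a c b) (\<mu> a b c) \<le> k" for a b c
    using perm[of "Transposition.transpose 2 3" "?a a b c"] by (simp add: permutes_swap_id)
  have s13: "dist (\<mu> c b a) (\<mu> a b c) \<le> k" for a b c
    using perm[of "Transposition.transpose 1 3" "?a a b c"] by (simp add: permutes_swap_id)
  show ?thesis by (rule that[OF maj s12 s23 s13])
qed

lemma C0'_C1'_imp_C1:
  assumes "C0' \<mu>" "C1' \<mu>"
  shows "C1 \<mu>"
proof -
  obtain k where swap12: "\<And>a b c. dist (\<mu> b a c) (\<mu> a b c) \<le> k"
    and swap13: "\<And>a b c. dist (\<mu> c b a) (\<mu> a b c) \<le> k"
    using C0'_bounds[OF assms(1)] by metis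
  obtain K H where first: "\<And>a a' b c. dist (\<mu> a b c) (\<mu> a' b c) \<le> K * dist a a' + H"
    using assms(2) unfolding C1'_def by blast
  have second: "dist (\<mu> a b c) (\<mu> a b' c) \<le> K * dist b b' + H + 2 * k" for a b b' c
    using dist_triangle[of "\<mu> a b c" "\<mu> a b' c" "\<mu> b a c"] dist_triangle[of "\<mu> b a c" "\<mu> a b' c" "\<mu> b' a c"]
      swap12[of a b c] swap12[of b' a c] first[of b a c b']
    by linarith
  have third: "dist (\<mu> a b c) (\<mu> a b c') \<le> K * dist c c' + H + 2 * k" for a b c c'
    using dist_triangle[of "\<mu> a b c" "\<mu> a b c'" "\<mu> c b a"] dist_triangle[of "\<mu> c b a" "\<mu> a b c'" "\<mu> c' b a"]
      swap13[of a b c] swap13[of c' b a] first[of c b a c']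
    by linarith
  have "coarse_lipschitz \<mu> K (3 * H + 4 * k)"
    unfolding coarse_lipschitz_def
  proof (intro allI)
    fix a b c a' b' c' :: 'a
    show "dist (\<mu> a b c) (\<mu> a' b' c') \<le> K * (dist a a' + dist b b' + dist c c') + (3 * H + 4 * k)"
      using dist_triangle[of "\<mu> a b c" "\<mu> a' b' c'" "\<mu> a' b c"] dist_triangle[of "\<mu> a' b c" "\<mu> a' b' c'" "\<mu> a' b' c"]
        first[of a b c a'] second[of a' b c b'] third[of a' b' c c']
      unfolding distrib_left by linarith
  qed
  then show ?thesis
    unfolding C1_iff_coarse_lipschitz by blast
qed

lemma C0'_C2'_C1_imp_coarse_median_laws:
  assumes "C0' \<mu>" "C2' \<mu>" "C1 \<mu>"
  shows "coarse_median_laws \<mu>"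
  unfolding coarse_median_laws_def
proof (intro allI impI)
  obtain k where k: "\<And>a b. dist (\<mu> a a b) a \<le> k" "\<And>a b c. dist (\<mu> b a c) (\<mu> a b c) \<le> k"
    "\<And>a b c. dist (\<mu> a c b) (\<mu> a b c) \<le> k"
    using C0'_bounds[OF assms(1)] by metis
  obtain \<kappa> where \<kappa>: "\<And>a b c d. dist (\<mu> (\<mu> a b c) b d) (\<mu> a b (\<mu> c b d)) \<le> \<kappa>"
    using assms(2) unfolding C2'_def by blast
  obtain K H where KH: "K \<ge> 0" "coarse_lipschitz \<mu> K H"
    using C1_imp_coarse_lipschitz_nonneg[OF assms(3)] by blast
  fix t s assume "median_eq t s"
  then show "bounded_apart \<mu> t s"
    unfolding bounded_apart_def
  proof (induction rule: median_eq.induct)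
    case (trans t s u)
    then obtain C D where "\<And>g. dist (eval_mterm \<mu> g t) (eval_mterm \<mu> g s) \<le> C"
      "\<And>g. dist (eval_mterm \<mu> g s) (eval_mterm \<mu> g u) \<le> D"
      by blast
    then have "dist (eval_mterm \<mu> g t) (eval_mterm \<mu> g u) \<le> C + D" for g
      by (meson add_mono dist_triangle order_trans)
    then show ?case by blast
  next
    case (cong t t' u u' v v')
    then obtain C D E where "\<And>g. dist (eval_mterm \<mu> g t) (eval_mterm \<mu> g t') \<le> C"
      "\<And>g. dist (eval_mterm \<mu> g u) (eval_mterm \<mu> g u') \<le> D"
      "\<And>g. dist (eval_mterm \<mu> g v) (eval_mterm \<mu> g v') \<le> E"
      by blast
    then have "dist (eval_mterm \<mu> g (Med t u v)) (eval_mterm \<mu> g (Med t' u' v')) \<le> K * (C + D + E) + H" for g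
      using coarse_lipschitz_le[OF KH(2,1)] by simp
    then show ?case by blast
  next
    case (majority a b)
    show ?case using k(1) by (intro exI[of _ k]) simp
  next
    case (swap12 a b c)
    show ?case using k(2) by (intro exI[of _ k]) simp
  next
    case (swap23 a b c)
    show ?case using k(3) by (intro exI[of _ k]) simp
  next
    case (assoc a b c d)
    show ?case using \<kappa> by (intro exI[of _ \<kappa>]) simp
  qed (auto simp: dist_commute intro: exI[of _ 0])
qed

lemma coarse_median_laws_truth_sets_bound:
  assumes "coarse_median_laws \<mu>"
  obtains C where
    "\<And>X Y Z g. X \<in> truth_sets p \<Longrightarrow> Y \<in> truth_sets p \<Longrightarrow> Z \<in> truth_sets p \<Longrightarrow>
      dist (eval_mterm \<mu> g (term_of_truth_set p (set_median X Y Z)))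
        (eval_mterm \<mu> g (Med (term_of_truth_set p X) (term_of_truth_set p Y) (term_of_truth_set p Z))) \<le> C"
    and "\<And>i g. i < p \<Longrightarrow> dist (eval_mterm \<mu> g (term_of_truth_set p (truth_set p (Var i)))) (g i) \<le> C"
proof -
  let ?Q = "truth_sets p" and ?rep = "term_of_truth_set p"
  have fin: "finite (?Q \<times> ?Q \<times> ?Q)"
    using finite_truth_sets by simp
  have bounded_med: "bounded_apart \<mu> (?rep (set_median X Y Z)) (Med (?rep X) (?rep Y) (?rep Z))"
    if "X \<in> ?Q" "Y \<in> ?Q" "Z \<in> ?Q" for X Y Z
    using assms median_eq_term_of_set_median[OF that] unfolding coarse_median_laws_def by blast
  obtain C1 where C1: "\<And>XYZ g. XYZ \<in> ?Q \<times> ?Q \<times> ?Q \<Longrightarrow>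
      dist (eval_mterm \<mu> g ((\<lambda>(X, Y, Z). ?rep (set_median X Y Z)) XYZ))
        (eval_mterm \<mu> g ((\<lambda>(X, Y, Z). Med (?rep X) (?rep Y) (?rep Z)) XYZ)) \<le> C1"
    using bounded_apart_uniform[of _ \<mu> "\<lambda>(X, Y, Z). ?rep (set_median X Y Z)"
        "\<lambda>(X, Y, Z). Med (?rep X) (?rep Y) (?rep Z)", OF fin] bounded_med by fastforce
  have bounded_var: "bounded_apart \<mu> (?rep (truth_set p (Var i))) (Var i)" if "i \<in> {..<p}" for i
    using that assms median_eq_term_of_Var unfolding coarse_median_laws_def by simp
  obtain C2 where C2: "\<And>i g. i \<in> {..<p} \<Longrightarrow>
      dist (eval_mterm \<mu> g (?rep (truth_set p (Var i)))) (eval_mterm \<mu> g (Var i)) \<le> C2"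
    using bounded_apart_uniform[of _ \<mu> "\<lambda>i. ?rep (truth_set p (Var i))" Var, OF finite_lessThan bounded_var]
    by blast
  show ?thesis
  proof (rule that[of "max C1 C2"])
    fix X Y Z g assume "X \<in> ?Q" "Y \<in> ?Q" "Z \<in> ?Q"
    then show "dist (eval_mterm \<mu> g (?rep (set_median X Y Z)))
        (eval_mterm \<mu> g (Med (?rep X) (?rep Y) (?rep Z))) \<le> max C1 C2"
      using C1[of "(X, Y, Z)" g] by simp
  next
    fix i g assume "i < p"
    then show "dist (eval_mterm \<mu> g (?rep (truth_set p (Var i)))) (g i) \<le> max C1 C2"
      using C2[of i g] by simp
  qed
qed

lemma approx_median_model_truth_sets:
  assumes med: "\<And>X Y Z g. X \<in> truth_sets p \<Longrightarrow> Y \<in> truth_sets p \<Longrightarrow> Z \<in> truth_sets p \<Longrightarrow>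
      dist (eval_mterm \<mu> g (term_of_truth_set p (set_median X Y Z)))
        (eval_mterm \<mu> g (Med (term_of_truth_set p X) (term_of_truth_set p Y) (term_of_truth_set p Z))) \<le> C"
    and var: "\<And>i g. i < p \<Longrightarrow> dist (eval_mterm \<mu> g (term_of_truth_set p (truth_set p (Var i)))) (g i) \<le> C"
    and A: "finite A" "card A \<le> p"
  shows "\<exists>\<pi> lam. approx_median_model \<mu> C A (truth_sets p) set_median \<pi> lam"
proof -
  obtain g where g: "bij_betw g {0..<card A} A"
    using ex_bij_betw_nat_finite[OF A(1)] by blast
  define idx where "idx = inv_into {0..<card A} g"
  have idx: "idx a < p" "g (idx a) = a" if "a \<in> A" for a
  proof -
    have "idx a \<in> {0..<card A}"
      using bij_betwE[OF bij_betw_inv_into[OF g]] that unfolding idx_def by blast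
    then show "idx a < p"
      using A(2) by simp
    show "g (idx a) = a"
      using bij_betw_inv_into_right[OF g that] unfolding idx_def .
  qed
  have "dist (eval_mterm \<mu> g (term_of_truth_set p (truth_set p (Var (idx a))))) a \<le> C" if "a \<in> A" for a
    using var[OF idx(1)[OF that], of g] idx(2)[OF that] by simp
  then have "approx_median_model \<mu> C A (truth_sets p) set_median
      (\<lambda>a. truth_set p (Var (idx a))) (\<lambda>X. eval_mterm \<mu> g (term_of_truth_set p X))"
    unfolding approx_median_model_def using med idx(1)
    by (simp add: finite_truth_sets median_algebra_on_truth_sets truth_set_Var_in_truth_sets)
  then show ?thesis by blast
qed

lemma coarse_median_laws_imp_C2:
  assumes "coarse_median_laws \<mu>"
  shows "C2 \<mu>"
proof (rule C2I[where 'b = "nat set set"])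
  fix p
  obtain C where med:
    "\<And>X Y Z g. X \<in> truth_sets p \<Longrightarrow> Y \<in> truth_sets p \<Longrightarrow> Z \<in> truth_sets p \<Longrightarrow>
      dist (eval_mterm \<mu> g (term_of_truth_set p (set_median X Y Z)))
        (eval_mterm \<mu> g (Med (term_of_truth_set p X) (term_of_truth_set p Y) (term_of_truth_set p Z))) \<le> C"
    and var: "\<And>i g. i < p \<Longrightarrow> dist (eval_mterm \<mu> g (term_of_truth_set p (truth_set p (Var i)))) (g i) \<le> C"
    using coarse_median_laws_truth_sets_bound[OF assms] by blast
  have "\<exists>\<pi> lam. approx_median_model \<mu> C A (truth_sets p) set_median \<pi> lam"
    if "finite A \<and> 1 \<le> card A \<and> card A \<le> p" for A
    using approx_median_model_truth_sets[OF med var] that by blast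
  then show "\<exists>h. \<forall>A. finite A \<and> 1 \<le> card A \<and> card A \<le> p \<longrightarrow>
      (\<exists>(Q::nat set set set) m \<pi> lam. approx_median_model \<mu> h A Q m \<pi> lam)"
    by (intro exI[of _ C] allI impI) blast
qed

theorem theorem3p1:
  fixes \<mu> :: "'a::metric_space \<Rightarrow> 'a \<Rightarrow> 'a \<Rightarrow> 'a"
  shows "C1 \<mu> \<and> C2 \<mu> \<longleftrightarrow> C0' \<mu> \<and> C1' \<mu> \<and> C2' \<mu>"
proof
  assume "C1 \<mu> \<and> C2 \<mu>"
  then have "C1 \<mu>" "coarse_median_laws \<mu>"
    using C1_C2_imp_coarse_median_laws by blast+
  then show "C0' \<mu> \<and> C1' \<mu> \<and> C2' \<mu>"
    using coarse_median_laws_imp_C0' C1_imp_C1' coarse_median_laws_imp_C2' by blast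
next
  assume "C0' \<mu> \<and> C1' \<mu> \<and> C2' \<mu>"
  then have "C1 \<mu>" "coarse_median_laws \<mu>"
    using C0'_C1'_imp_C1 C0'_C2'_C1_imp_coarse_median_laws by blast+
  then show "C1 \<mu> \<and> C2 \<mu>"
    using coarse_median_laws_imp_C2 by blast
qed

end
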